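(* Let $q\in\mathbb{C}$ and $K(u,v)=u^2+v^2-(q-2)uv-1$. There exists a non-constant polynomial $J(u)\in\mathbb{C}[u]$ such that $K(u,v)$ divides $J(u)-J(v)$ in $\mathbb{C}[u,v]$ if and only if $q=2+2\cos\frac{2k\pi}{m}$ for some integers $k,m$ with $0<2k<m$. Moreover, if this holds with $k$ and $m$ relatively prime, then $J(u)=T_m\big(u\sin\frac{2k\pi}{m}\big)$ is such a polynomial, and it has minimal degree (namely $m$) among all such non-constant polynomials.
   Context: $T_m$ denotes the $m$-th Chebyshev polynomial of the first kind, defined by $T_m(\cos\phi)=\cos(m\phi)$; equivalently $T_0=1$, $T_1(x)=x$, $T_m(x)=2xT_{m-1}(x)-T_{m-2}(x)$ for $m\ge2$. *)

theory Defs
  imports "HOL-Computational_Algebra.Polynomial" Complex_Main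
begin

text \<open>Bivariate polynomials C[u,v] are represented as complex poly poly = (C[u])[v]:
  the outer variable is v, the coefficients are polynomials in u.\<close>

fun cheb :: "nat \<Rightarrow> complex poly" where
  "cheb 0 = 1"
| "cheb (Suc 0) = [:0, 1:]"
| "cheb (Suc (Suc n)) = [:0, 2:] * cheb (Suc n) - cheb n"

definition Kpoly :: "complex \<Rightarrow> complex poly poly" where
  "Kpoly q = [: [:-1, 0, 1:], [:0, -(q - 2):], 1 :]"

definition Jdiff :: "complex poly \<Rightarrow> complex poly poly" where
  "Jdiff J = [:J:] - map_poly (\<lambda>c. [:c:]) J"

end

theory Submission
  imports Defs
begin

(* Write C = {(u,v). u^2 + v^2 - (q-2) u v - 1 = 0} for the conic cut out by K.
   Since K is monic of degree 2 in v and, for all but finitely many u, has two distinct roots v,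
   K divides J(u) - J(v) exactly when J(u) = J(v) for every (u,v) on C ("J is C-invariant").
   Parametrize q - 2 = l + 1/l.  For l^2 <> 1 the points x_n = c l^n + B c^-1 l^-n with
   B (l - 1/l)^2 = -1 satisfy (x_n, x_(n+1)) on C, so an invariant J is constant along this
   orbit; for l = +-1 the points n l^n do the same.  If l is not a root of unity, or l = +-1,
   the orbit is infinite and J must be constant, so a non-constant invariant J forces l to be a
   root of unity other than +-1, i.e. q = 2 + 2 cos (2 k pi / m) with 0 < 2k < m.  If moreover
   k, m are coprime, l is a primitive m-th root of unity and, for a suitable scale c, the orbit
   has m distinct points, giving deg J >= m.  Conversely, with S = sin(2 k pi/m), the identity
   T_m((w + 1/w)/2) = (w^m + w^-m)/2 and a factorization of K show that T_m(S u) is invariant. *)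

definition conic :: "complex \<Rightarrow> complex \<Rightarrow> complex \<Rightarrow> bool" where
  "conic q u v \<longleftrightarrow> u^2 + v^2 - (q - 2) * u * v - 1 = 0"

definition conic_invariant :: "complex \<Rightarrow> complex poly \<Rightarrow> bool" where
  "conic_invariant q J \<longleftrightarrow> (\<forall>u v. conic q u v \<longrightarrow> poly J u = poly J v)"

definition poly2 :: "complex poly poly \<Rightarrow> complex \<Rightarrow> complex \<Rightarrow> complex" where
  "poly2 P u v = poly (poly P [:v:]) u"

lemma poly2_add [simp]: "poly2 (P + Q) u v = poly2 P u v + poly2 Q u v"
  and poly2_mult [simp]: "poly2 (P * Q) u v = poly2 P u v * poly2 Q u v"
  by (simp_all add: poly2_def)

lemma poly2_Kpoly: "poly2 (Kpoly q) u v = 0 \<longleftrightarrow> conic q u v"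
  by (simp add: poly2_def Kpoly_def conic_def algebra_simps power2_eq_square)

lemma poly_map_poly_const: "poly (map_poly (\<lambda>c. [:c:]) p) [:x:] = [:poly p x:]"
  by (induction p) (auto simp: map_poly_pCons mult.commute)

lemma poly2_Jdiff: "poly2 (Jdiff J) u v = poly J u - poly J v"
  by (simp add: poly2_def Jdiff_def poly_map_poly_const)

lemma conic_two_points:
  assumes "(q - 2)^2 * u^2 - 4 * (u^2 - 1) \<noteq> 0"
  obtains v1 v2 where "v1 \<noteq> v2" "conic q u v1" "conic q u v2"
proof -
  define D where "D = (q - 2)^2 * u^2 - 4 * (u^2 - 1)"
  have root: "conic q u (((q - 2) * u + s) / 2)" if "s^2 = D" for s
  proof -
    have "u^2 + (((q - 2) * u + s) / 2)^2 - (q - 2) * u * (((q - 2) * u + s) / 2) - 1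
          = (s^2 - D) / 4"
      by (simp add: D_def field_simps power2_eq_square)
    then show ?thesis using that unfolding conic_def by simp
  qed
  have "csqrt D \<noteq> 0" using assms by (simp add: D_def)
  then have "((q - 2) * u + csqrt D) / 2 \<noteq> ((q - 2) * u + - csqrt D) / 2" by simp
  moreover have "conic q u (((q - 2) * u + csqrt D) / 2)" "conic q u (((q - 2) * u + - csqrt D) / 2)"
    using root[of "csqrt D"] root[of "- csqrt D"] by simp_all
  ultimately show thesis by (rule that)
qed

lemma poly_eq_0_off_finite:
  fixes p :: "'a :: {idom, ring_char_0} poly"
  assumes "finite A" and "\<And>x. x \<notin> A \<Longrightarrow> poly p x = 0"
  shows "p = 0"
proof (rule ccontr)
  assume "p \<noteq> 0"
  then have "finite (A \<union> {x. poly p x = 0})" using assms(1) poly_roots_finite by blast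
  moreover have "A \<union> {x. poly p x = 0} = UNIV" using assms(2) by blast
  ultimately show False using infinite_UNIV_char_0[where 'a = 'a] by simp
qed

(* A polynomial of degree < 2 in v vanishing on the conic is zero: evaluate at the two
   points above a generic u. *)
lemma linear_in_v_vanishing_on_conic:
  fixes r0 r1 :: "complex poly"
  assumes "\<And>u v. conic q u v \<Longrightarrow> poly r0 u + v * poly r1 u = 0"
  shows "r0 = 0 \<and> r1 = 0"
proof -
  define D where "D = [:4, 0, (q - 2)^2 - 4:]"
  have "D \<noteq> 0" by (simp add: D_def)
  have both: "poly r1 u = 0 \<and> poly r0 u = 0" if "u \<notin> {x. poly D x = 0}" for u
  proof -
    have "(q - 2)^2 * u^2 - 4 * (u^2 - 1) \<noteq> 0"
      using that by (simp add: D_def algebra_simps power2_eq_square)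
    then obtain v1 v2 where "v1 \<noteq> v2" "conic q u v1" "conic q u v2" by (rule conic_two_points)
    then have "poly r0 u + v1 * poly r1 u = 0" "poly r0 u + v2 * poly r1 u = 0"
      using assms by blast+
    then have "(v1 - v2) * poly r1 u = 0"
      by (metis diff_self left_diff_distrib add_diff_cancel_left)
    then show ?thesis using \<open>v1 \<noteq> v2\<close> \<open>poly r0 u + v1 * poly r1 u = 0\<close> by simp
  qed
  have "finite {x. poly D x = 0}" using \<open>D \<noteq> 0\<close> by (rule poly_roots_finite)
  then show ?thesis using both poly_eq_0_off_finite by metis
qed

(* Bivariate Nullstellensatz for the conic: the remainder of pseudo-division by the monic
   (in v) polynomial K has degree < 2 in v and vanishes on the conic. *)
lemma Kpoly_dvd_if_vanishing_on_conic:
  assumes vanish: "\<And>u v. conic q u v \<Longrightarrow> poly2 P u v = 0"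
  shows "Kpoly q dvd P"
proof -
  obtain Q R where div: "pseudo_divmod P (Kpoly q) = (Q, R)" by (metis prod.exhaust)
  have "Kpoly q \<noteq> 0" and "degree (Kpoly q) = 2" and "coeff (Kpoly q) 2 = 1"
    by (auto simp: Kpoly_def numeral_2_eq_2)
  with pseudo_divmod[OF _ div] have PQR: "P = Kpoly q * Q + R" and "R = 0 \<or> degree R < 2"
    by auto
  then have R: "R = [:coeff R 0, coeff R 1:]"
    by (intro poly_eqI) (auto simp: coeff_pCons coeff_eq_0 split: nat.split)
  have "poly (coeff R 0) u + v * poly (coeff R 1) u = 0" if "conic q u v" for u v
  proof -
    have "poly2 (Kpoly q) u v = 0" using that by (simp add: poly2_Kpoly)
    moreover have "poly2 P u v = poly2 (Kpoly q) u v * poly2 Q u v + poly2 R u v"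
      using PQR by simp
    ultimately have "poly2 R u v = 0" using vanish[OF that] by simp
    then show ?thesis by (subst (asm) R) (simp add: poly2_def)
  qed
  then have "coeff R 0 = 0 \<and> coeff R 1 = 0" by (rule linear_in_v_vanishing_on_conic)
  then have "R = 0" by (subst R) simp
  then show ?thesis using PQR by simp
qed

lemma Kpoly_dvd_Jdiff_iff: "Kpoly q dvd Jdiff J \<longleftrightarrow> conic_invariant q J"
proof
  assume "Kpoly q dvd Jdiff J"
  then obtain Q where Q: "Jdiff J = Kpoly q * Q" by (rule dvdE)
  show "conic_invariant q J" unfolding conic_invariant_def
  proof (intro allI impI)
    fix u v assume "conic q u v"
    then have "poly2 (Jdiff J) u v = 0" by (simp add: Q flip: poly2_Kpoly)
    then show "poly J u = poly J v" by (simp add: poly2_Jdiff)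
  qed
next
  assume "conic_invariant q J"
  then show "Kpoly q dvd Jdiff J"
    by (intro Kpoly_dvd_if_vanishing_on_conic) (simp add: poly2_Jdiff conic_invariant_def)
qed

lemma poly_cheb_joukowski:
  fixes w y :: complex
  assumes "w * y = 1"
  shows "poly (cheb n) ((w + y) / 2) = (w^n + y^n) / 2"
proof (induction n rule: cheb.induct)
  case (3 n)
  have "poly (cheb (Suc (Suc n))) ((w + y) / 2)
        = 2 * ((w + y) / 2) * poly (cheb (Suc n)) ((w + y) / 2) - poly (cheb n) ((w + y) / 2)"
    by simp
  also have "\<dots> = (w + y) * ((w^Suc n + y^Suc n) / 2) - (w^n + y^n) / 2"
    by (simp only: "3.IH") simp
  also have "\<dots> = (w^Suc (Suc n) + y^Suc (Suc n) + (w * y - 1) * (w^n + y^n)) / 2"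
    by (simp add: field_simps)
  finally show ?case using assms by simp
qed simp_all

lemma degree_cheb: "degree (cheb n) = n"
proof (induction n rule: cheb.induct)
  case (3 n)
  then have "cheb (Suc n) \<noteq> 0" by auto
  then have "degree ([:0, 2:] * cheb (Suc n)) = Suc (Suc n)"
    using "3.IH" by (subst degree_mult_eq) auto
  then show ?case
    using "3.IH" unfolding cheb.simps diff_conv_add_uminus by (subst degree_add_eq_left) auto
qed auto

lemma sin_pos_of_bounds:
  assumes "0 < 2 * k" "2 * k < m"
  shows "0 < sin (2 * real k * pi / real m)"
proof (rule sin_gt_zero)
  have "2 * real k < real m" using assms(2) by linarith
  then show "2 * real k * pi / real m < pi" using assms by (simp add: divide_less_eq)
qed (use assms in simp)

(* If u = (w + 1/w)/(2S) and l + 1/l = 2C with C^2 + S^2 = 1, then K(u,v) (with q - 2 = 2C)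
   factors into two linear factors in v, whose roots are again of Joukowski form. *)
lemma conic_factorization:
  fixes S C u v w y l l' :: complex
  assumes "w * y = 1" "w + y = 2 * S * u" "l * l' = 1" "l + l' = 2 * C" "C^2 + S^2 = 1"
  shows "(S * v - (w * l + y * l') / 2) * (S * v - (w * l' + y * l) / 2)
         = S^2 * (u^2 + v^2 - 2 * C * u * v - 1)"
  using assms by algebra

lemma joukowski_lift:
  fixes t :: complex
  obtains w y where "w * y = 1" "w + y = 2 * t"
proof
  show "(t + csqrt (t^2 - 1)) * (t - csqrt (t^2 - 1)) = 1"
    by (simp add: algebra_simps power2_eq_square flip: power2_eq_square)
qed simp

lemma poly_scaled_cheb:
  fixes S x W Y :: complex
  assumes "W * Y = 1" "S * x = (W + Y) / 2"
  shows "poly (pcompose (cheb m) [:0, S:]) x = (W^m + Y^m) / 2"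
proof -
  have "poly (pcompose (cheb m) [:0, S:]) x = poly (cheb m) (S * x)"
    by (simp add: poly_pcompose mult.commute)
  also have "\<dots> = (W^m + Y^m) / 2" unfolding assms(2) by (rule poly_cheb_joukowski[OF assms(1)])
  finally show ?thesis .
qed

(* Sufficiency: for q = 2 + 2 cos th with th = 2 k pi / m, the polynomial T_m(u sin th) is
   invariant; the two points above u correspond to multiplying w by l or 1/l, where l = cis th
   satisfies l^m = 1. *)
lemma chebyshev_invariant:
  fixes k m :: nat
  defines "th \<equiv> 2 * real k * pi / real m"
  assumes "2 * k < m" and q: "q = 2 + 2 * complex_of_real (cos th)"
  shows "conic_invariant q (pcompose (cheb m) [:0, complex_of_real (sin th):])"
  unfolding conic_invariant_def
proof (intro allI impI)
  fix u v assume "conic q u v"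
  define S C l where "S = complex_of_real (sin th)" and "C = complex_of_real (cos th)"
    and "l = cis th"
  have "real m * th = 2 * pi * real k" using assms(2) by (simp add: th_def)
  then have "l^m = 1" by (simp add: l_def DeMoivre)
  then have lm: "l^m = 1" "inverse l ^ m = 1" by (simp_all add: power_inverse)
  have l_inv: "l * inverse l = 1" by (simp add: l_def cis_mult)
  have "l + inverse l = 2 * C" by (simp add: l_def C_def complex_eq_iff)
  have "C^2 + S^2 = 1" by (simp add: C_def S_def flip: of_real_power of_real_add)
  obtain w y where wy: "w * y = 1" "w + y = 2 * (S * u)" by (rule joukowski_lift)
  have twisted: "(w * a) * (y * b) = 1" if "a * b = 1" for a b
  proof -
    have "(w * a) * (y * b) = (w * y) * (a * b)" by (simp add: ac_simps)
    then show ?thesis using wy(1) that by simp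
  qed
  have "poly (pcompose (cheb m) [:0, S:]) u = (w^m + y^m) / 2"
    using wy by (intro poly_scaled_cheb) simp_all
  moreover have "S * v = (w * l + y * inverse l) / 2 \<or> S * v = (w * inverse l + y * l) / 2"
    using conic_factorization[OF wy(1) _ l_inv \<open>l + inverse l = 2 * C\<close> \<open>C^2 + S^2 = 1\<close>, of u v]
      wy(2) \<open>conic q u v\<close> q by (simp add: conic_def C_def mult.assoc)
  then have "poly (pcompose (cheb m) [:0, S:]) v = (w^m + y^m) / 2"
  proof
    assume "S * v = (w * l + y * inverse l) / 2"
    with twisted[OF l_inv] have "poly (pcompose (cheb m) [:0, S:]) v
                                 = ((w * l)^m + (y * inverse l)^m) / 2"
      by (rule poly_scaled_cheb)
    then show ?thesis by (simp add: power_mult_distrib lm)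
  next
    assume "S * v = (w * inverse l + y * l) / 2"
    with twisted[of "inverse l" l] l_inv have "poly (pcompose (cheb m) [:0, S:]) v
                                 = ((w * inverse l)^m + (y * l)^m) / 2"
      by (intro poly_scaled_cheb) (simp_all add: mult.commute)
    then show ?thesis by (simp add: power_mult_distrib lm)
  qed
  ultimately have "poly (pcompose (cheb m) [:0, S:]) u = poly (pcompose (cheb m) [:0, S:]) v"
    by (simp only:)
  then show "poly (pcompose (cheb m) [:0, complex_of_real (sin th):]) u
           = poly (pcompose (cheb m) [:0, complex_of_real (sin th):]) v"
    by (simp add: S_def)
qed

lemma conic_chain_invariant:
  assumes "conic_invariant q J" and "\<And>n. conic q (f n) (f (Suc n))"
  shows "poly J (f n) = poly J (f 0)"
proof (induction n)
  case (Suc n)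
  then show ?case using assms unfolding conic_invariant_def by metis
qed simp

lemma conic_chain_card_bound:
  assumes "conic_invariant q J" "degree J > 0" "\<And>n. conic q (f n) (f (Suc n))"
    and "inj_on f S"
  shows "finite S \<and> card S \<le> degree J"
proof -
  define p where "p = J - [:poly J (f 0):]"
  have "p \<noteq> 0"
  proof
    assume "p = 0"
    then have "J = [:poly J (f 0):]" by (simp add: p_def)
    then show False using assms(2) by (metis degree_pCons_0 less_irrefl)
  qed
  have "degree p \<le> degree J" unfolding p_def by (rule degree_diff_le) auto
  have "f ` S \<subseteq> {x. poly p x = 0}"
    using conic_chain_invariant[of q J f, OF assms(1,3)] by (auto simp: p_def)
  then have "finite (f ` S)" and "card (f ` S) \<le> card {x. poly p x = 0}"
    using poly_roots_finite[OF \<open>p \<noteq> 0\<close>] by (auto intro: finite_subset card_mono)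
  moreover have "card {x. poly p x = 0} \<le> degree p" using \<open>p \<noteq> 0\<close> by (rule card_poly_roots_bound)
  ultimately show ?thesis
    using \<open>degree p \<le> degree J\<close> assms(4) by (simp add: finite_image_iff card_image)
qed

definition orbit :: "complex \<Rightarrow> complex \<Rightarrow> complex \<Rightarrow> nat \<Rightarrow> complex" where
  "orbit l B c n = c * l^n + B / c * inverse l ^ n"

lemma orbit_conic:
  assumes "l \<noteq> 0" "c \<noteq> 0" "B * (l - inverse l)^2 = -1"
  shows "conic (2 + l + inverse l) (orbit l B c n) (orbit l B c (Suc n))"
proof -
  define x where "x = c * l^n"
  have "x \<noteq> 0" using assms by (simp add: x_def)
  then have "x * inverse x = 1" and "l * inverse l = 1" using assms by simp_all
  moreover have "orbit l B c n = x + B * inverse x"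
    and "orbit l B c (Suc n) = l * x + B * (inverse l * inverse x)"
    by (simp_all add: orbit_def x_def field_simps)
  ultimately show ?thesis using assms(3) unfolding conic_def
    by (simp only: add_diff_cancel_left') algebra
qed

lemma orbit_collision:
  assumes "l \<noteq> 0" "c \<noteq> 0" "orbit l B c a = orbit l B c b" "l^a \<noteq> l^b"
  shows "c^2 * l^(a + b) = B"
proof -
  define X Y where "X = c * l^a" and "Y = c * l^b"
  have "X \<noteq> Y" using assms by (simp add: X_def Y_def)
  have "X \<noteq> 0" "Y \<noteq> 0" using assms(1,2) by (simp_all add: X_def Y_def)
  then have "X * inverse X = 1" "Y * inverse Y = 1" by simp_all
  moreover have "X + B * inverse X = Y + B * inverse Y"
    using assms(3) by (simp add: orbit_def X_def Y_def field_simps)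
  ultimately have "(X - Y) * (X * Y - B) = 0" by algebra
  then have "X * Y = B" using \<open>X \<noteq> Y\<close> by simp
  then show ?thesis by (simp add: X_def Y_def power_add power2_eq_square ac_simps)
qed

lemma conic_parameter:
  fixes q :: complex
  shows "\<exists>l. l \<noteq> 0 \<and> q = 2 + l + inverse l"
proof -
  define c where "c = (q - 2) / 2"
  define l l' where "l = c + csqrt (c^2 - 1)" and "l' = c - csqrt (c^2 - 1)"
  have "l * l' = c^2 - (csqrt (c^2 - 1))^2"
    by (simp add: l_def l'_def algebra_simps power2_eq_square)
  then have "l * l' = 1" by simp
  then have "l \<noteq> 0" and "inverse l = l'" by (auto intro: inverse_unique)
  then show ?thesis by (intro exI[of _ l]) (simp add: l_def l'_def c_def)
qed

lemma power_eq_imp_root_of_unity: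
  fixes l :: "'a :: field"
  assumes "l \<noteq> 0" "b \<le> a" "l^a = l^b"
  shows "l^(a - b) = 1"
proof -
  have "l^(a - b) * l^b = l^b" using assms(2,3) by (simp flip: power_add)
  then show ?thesis using assms(1) by simp
qed

(* A root of unity l <> +-1 gives l + 1/l = 2 cos (2 k pi / m) with 0 < 2k < m (replacing k
   by m - k if necessary). *)
lemma root_of_unity_cos:
  fixes l :: complex
  assumes "l^n = 1" "n > 0" "l^2 \<noteq> 1"
  shows "\<exists>k m :: nat. 0 < 2 * k \<and> 2 * k < m \<and>
           l + inverse l = 2 * complex_of_real (cos (2 * real k * pi / real m))"
proof -
  obtain j where "j < n" and l: "l = cis (2 * pi * real j / real n)"
    using bij_betw_roots_unity[OF assms(2)] assms(1) by (auto simp: bij_betw_def)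
  define c where "c = cos (2 * real j * pi / real n)"
  have sum: "l + inverse l = 2 * complex_of_real c"
    by (simp add: l c_def complex_eq_iff mult.commute mult.left_commute)
  have "j \<noteq> 0"
  proof
    assume "j = 0"
    then have "l = 1" by (simp add: l)
    then show False using assms(3) by simp
  qed
  have "2 * j \<noteq> n"
  proof
    assume "2 * j = n"
    then have "l = -1" using assms(2) by (simp add: l flip: \<open>2 * j = n\<close>)
    then show False using assms(3) by simp
  qed
  have cos_reflect: "cos (2 * real (n - j) * pi / real n) = c"
  proof -
    have "2 * real (n - j) * pi / real n = 2 * pi - 2 * real j * pi / real n"
      using \<open>j < n\<close> assms(2) by (simp add: of_nat_diff field_simps)
    then show ?thesis by (simp add: c_def)
  qed
  show ?thesis
  proof (cases "2 * j < n")
    case True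
    then show ?thesis using \<open>j \<noteq> 0\<close> sum unfolding c_def
      by (intro exI[of _ j] exI[of _ n]) simp
  next
    case False
    then have "0 < 2 * (n - j)" "2 * (n - j) < n" using \<open>2 * j \<noteq> n\<close> \<open>j < n\<close> by auto
    then show ?thesis using sum cos_reflect by (intro exI[of _ "n - j"] exI[of _ n]) simp
  qed
qed

lemma degenerate_infinite_chain:
  fixes l :: complex
  assumes "l^2 = 1"
  shows "\<exists>f S. infinite S \<and> inj_on f S \<and> (\<forall>n. conic (2 + l + inverse l) (f n) (f (Suc n)))"
proof -
  have "inverse l = l" using assms by (simp add: inverse_unique power2_eq_square)
  define f where "f n = of_nat n * l^n" for n
  have "conic (2 + l + inverse l) (f n) (f (Suc n))" for n
  proof -
    have "l^n * l^n = 1" using assms by (metis power_mult_distrib power_one power2_eq_square)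
    then show ?thesis using assms \<open>inverse l = l\<close> unfolding conic_def
      by (simp add: f_def power2_eq_square algebra_simps)
  qed
  moreover have "norm l ^ 2 = 1" using assms by (metis norm_one norm_power)
  then have "norm l = 1" using norm_ge_zero[of l] by (auto simp: power2_eq_1_iff)
  then have "norm (f n) = real n" for n by (simp add: f_def norm_mult norm_power)
  then have "inj f" by (intro injI) (metis of_nat_eq_iff)
  ultimately show ?thesis by (intro exI[of _ f] exI[of _ UNIV]) simp
qed

(* If l is not a root of unity, the orbit (with c = 1) is injective beyond the at most one
   exponent j with l^j = B, hence gives an infinite injective chain on the conic. *)
lemma free_infinite_chain:
  fixes l :: complex
  assumes "l \<noteq> 0" and free: "\<forall>n>0. l^n \<noteq> 1"
  shows "\<exists>f S. infinite S \<and> inj_on f S \<and> (\<forall>n. conic (2 + l + inverse l) (f n) (f (Suc n)))"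
proof -
  have "l^2 \<noteq> 1" using free by simp
  then have "l - inverse l \<noteq> 0"
    using assms(1) by (metis eq_iff_diff_eq_0 power2_eq_square right_inverse)
  define B where "B = - inverse ((l - inverse l)^2)"
  have B: "B * (l - inverse l)^2 = -1" using \<open>l - inverse l \<noteq> 0\<close> by (simp add: B_def)
  have inj_powers: "inj (\<lambda>j. l^j)"
  proof (rule injI)
    fix a b assume "l^a = l^b"
    then have "l^(a - b) = 1" "l^(b - a) = 1"
      using power_eq_imp_root_of_unity[OF assms(1), of b a]
        power_eq_imp_root_of_unity[OF assms(1), of a b]
      by (cases "b \<le> a"; simp)+
    then have "a - b = 0" "b - a = 0" using free by blast+
    then show "a = b" by simp
  qed
  have "finite ((\<lambda>j. l^j) -` {B})" using inj_powers by (intro finite_vimageI) auto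
  then obtain N where N: "\<And>j. l^j = B \<Longrightarrow> j \<le> N"
    by (auto simp: finite_nat_set_iff_bounded_le)
  have "inj_on (orbit l B 1) {N<..}"
  proof (rule inj_onI)
    fix a b assume "a \<in> {N<..}" "b \<in> {N<..}" and same: "orbit l B 1 a = orbit l B 1 b"
    show "a = b"
    proof (rule ccontr)
      assume "a \<noteq> b"
      then have "l^a \<noteq> l^b" using inj_powers by (auto dest: injD)
      then have "l^(a + b) = B" using orbit_collision[OF assms(1) _ same] by simp
      then show False using N[of "a + b"] \<open>a \<in> {N<..}\<close> by simp
    qed
  qed
  moreover have "conic (2 + l + inverse l) (orbit l B 1 n) (orbit l B 1 (Suc n))" for n
    using orbit_conic[OF assms(1) _ B] by simp
  ultimately show ?thesis using infinite_Ioi by blast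
qed

lemma invariant_necessary:
  fixes q :: complex
  assumes inv: "conic_invariant q J" and deg: "degree J > 0"
  shows "\<exists>k m :: nat. 0 < 2 * k \<and> 2 * k < m \<and>
           q = 2 + 2 * complex_of_real (cos (2 * real k * pi / real m))"
proof -
  obtain l where "l \<noteq> 0" and q: "q = 2 + l + inverse l" using conic_parameter by blast
  show ?thesis
  proof (cases "l^2 \<noteq> 1 \<and> (\<exists>n>0. l^n = 1)")
    case True
    then obtain n where "n > 0" "l^n = 1" "l^2 \<noteq> 1" by blast
    from root_of_unity_cos[OF this(2,1,3)] obtain k m :: nat where
      "0 < 2 * k" "2 * k < m" "l + inverse l = 2 * complex_of_real (cos (2 * real k * pi / real m))"
      by blast
    then show ?thesis by (intro exI[of _ k] exI[of _ m]) (simp add: q add.assoc)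
  next
    case False
    have "\<exists>f S. infinite S \<and> inj_on f S \<and> (\<forall>n. conic (2 + l + inverse l) (f n) (f (Suc n)))"
    proof (cases "l^2 = 1")
      case True
      then show ?thesis by (rule degenerate_infinite_chain)
    next
      case False
      with \<open>\<not> (l^2 \<noteq> 1 \<and> (\<exists>n>0. l^n = 1))\<close> have "\<forall>n>0. l^n \<noteq> 1" by blast
      with \<open>l \<noteq> 0\<close> show ?thesis by (rule free_infinite_chain)
    qed
    then obtain f S where "infinite S" "inj_on f S" "\<And>n. conic q (f n) (f (Suc n))"
      unfolding q by blast
    then show ?thesis using conic_chain_card_bound[OF inv deg, of f S] by blast
  qed
qed

lemma cis_root_of_unity_order:
  fixes k m d :: nat
  assumes "coprime k m" "0 < m" "cis (2 * real k * pi / real m) ^ d = 1"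
  shows "m dvd d"
proof -
  have "cos (real d * (2 * real k * pi / real m)) = 1"
    using assms(3) by (simp add: DeMoivre complex_eq_iff)
  then obtain j :: int where "real d * (2 * real k * pi / real m) = of_int j * 2 * pi"
    by (auto simp: cos_one_2pi_int)
  then have "real (d * k) = of_int j * real m" using assms(2) by (simp add: field_simps)
  then have "int (d * k) = j * int m" by (metis of_int_eq_iff of_int_mult of_int_of_nat_eq)
  then have "m dvd d * k" by (metis dvd_triv_right of_nat_dvd_iff mult.commute)
  then show ?thesis using assms(1) by (simp add: coprime_commute coprime_dvd_mult_left_iff)
qed

lemma cis_powers_inj:
  fixes k m :: nat
  assumes "coprime k m" "0 < m"
  shows "inj_on (\<lambda>a. cis (2 * real k * pi / real m) ^ a) {..<m}"
proof (rule inj_onI)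
  fix a b assume "a \<in> {..<m}" "b \<in> {..<m}"
    and eq: "cis (2 * real k * pi / real m) ^ a = cis (2 * real k * pi / real m) ^ b"
  have "m dvd a - b" "m dvd b - a"
    using power_eq_imp_root_of_unity[of "cis (2 * real k * pi / real m)" b a, OF _ _ eq]
      power_eq_imp_root_of_unity[of "cis (2 * real k * pi / real m)" a b, OF _ _ eq[symmetric]]
      cis_root_of_unity_order[OF assms]
    by (cases "b \<le> a"; simp)+
  moreover have "a - b < m" "b - a < m" using \<open>a \<in> {..<m}\<close> \<open>b \<in> {..<m}\<close> by auto
  ultimately have "a - b = 0" "b - a = 0" using nat_dvd_not_less by blast+
  then show "a = b" by simp
qed

(* Minimality: for coprime k, m the orbit with l = cis (2 k pi / m) and scale c = |B| + 1 has
   m distinct points (a collision would force |B| = c^2), so every non-constant invariant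
   polynomial has degree at least m. *)
lemma chebyshev_minimal:
  fixes k m :: nat
  defines "th \<equiv> 2 * real k * pi / real m"
  assumes k: "0 < 2 * k" "2 * k < m" and "coprime k m"
    and q: "q = 2 + 2 * complex_of_real (cos th)"
    and inv: "conic_invariant q J" and deg: "degree J > 0"
  shows "m \<le> degree J"
proof -
  define l where "l = cis th"
  have "l \<noteq> 0" by (simp add: l_def)
  have "q = 2 + l + inverse l" by (simp add: q l_def complex_eq_iff)
  have "l - inverse l = 2 * \<i> * complex_of_real (sin th)" by (simp add: l_def complex_eq_iff)
  then have "l - inverse l \<noteq> 0" using sin_pos_of_bounds[OF k] by (simp add: th_def)
  define B where "B = - inverse ((l - inverse l)^2)"
  have B: "B * (l - inverse l)^2 = -1" using \<open>l - inverse l \<noteq> 0\<close> by (simp add: B_def)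
  define c where "c = complex_of_real (norm B + 1)"
  have "c \<noteq> 0" unfolding c_def of_real_eq_0_iff using norm_ge_zero[of B] by linarith
  have "inj_on (orbit l B c) {..<m}"
  proof (rule inj_onI, rule ccontr)
    fix a b assume "a \<in> {..<m}" "b \<in> {..<m}" and same: "orbit l B c a = orbit l B c b" "a \<noteq> b"
    then have "l^a \<noteq> l^b"
      using cis_powers_inj[OF \<open>coprime k m\<close>] k by (auto simp: l_def th_def dest: inj_onD)
    then have "c^2 * l^(a + b) = B" using orbit_collision[OF \<open>l \<noteq> 0\<close> \<open>c \<noteq> 0\<close> same(1)] by simp
    moreover have "norm (c^2 * l^(a + b)) = (norm B + 1)^2"
      by (simp add: c_def l_def norm_mult norm_power)
    ultimately have "(norm B + 1)^2 = norm B" by simp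
    moreover have "norm B < (norm B + 1)^2"
    proof -
      have "(norm B + 1)^2 = norm B + (norm B^2 + norm B + 1)"
        by (simp add: power2_eq_square algebra_simps)
      then show ?thesis using norm_ge_zero[of B] zero_le_power2[of "norm B"] by linarith
    qed
    ultimately show False by simp
  qed
  moreover have "conic q (orbit l B c n) (orbit l B c (Suc n))" for n
    unfolding \<open>q = 2 + l + inverse l\<close> using orbit_conic[OF \<open>l \<noteq> 0\<close> \<open>c \<noteq> 0\<close> B] .
  ultimately have "card {..<m} \<le> degree J" using conic_chain_card_bound[OF inv deg] by blast
  then show ?thesis by simp
qed

lemma chebyshev_solution:
  fixes k m :: nat
  defines "J \<equiv> pcompose (cheb m) [:0, complex_of_real (sin (2 * real k * pi / real m)):]"
  assumes "0 < 2 * k" "2 * k < m" "q = 2 + 2 * complex_of_real (cos (2 * real k * pi / real m))"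
  shows "degree J = m" and "Kpoly q dvd Jdiff J"
proof -
  show "degree J = m"
    using sin_pos_of_bounds[OF assms(2,3)] by (simp add: J_def degree_pcompose degree_cheb)
  show "Kpoly q dvd Jdiff J"
    unfolding Kpoly_dvd_Jdiff_iff J_def using assms(3,4) by (rule chebyshev_invariant)
qed

theorem proposition5p1:
  fixes q :: complex
  shows "((\<exists>J :: complex poly. degree J > 0 \<and> Kpoly q dvd Jdiff J) \<longleftrightarrow>
           (\<exists>k m :: nat. 0 < 2 * k \<and> 2 * k < m \<and>
              q = 2 + 2 * complex_of_real (cos (2 * real k * pi / real m))))
       \<and> (\<forall>k m :: nat. 0 < 2 * k \<and> 2 * k < m \<and> coprime k m \<and>
              q = 2 + 2 * complex_of_real (cos (2 * real k * pi / real m)) \<longrightarrow>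
            (let J = pcompose (cheb m) [:0, complex_of_real (sin (2 * real k * pi / real m)):]
             in degree J > 0 \<and> Kpoly q dvd Jdiff J \<and> degree J = m \<and>
                (\<forall>J' :: complex poly. degree J' > 0 \<and> Kpoly q dvd Jdiff J' \<longrightarrow> m \<le> degree J')))"
proof (intro conjI iffI allI impI)
  assume "\<exists>J :: complex poly. degree J > 0 \<and> Kpoly q dvd Jdiff J"
  then show "\<exists>k m :: nat. 0 < 2 * k \<and> 2 * k < m \<and>
              q = 2 + 2 * complex_of_real (cos (2 * real k * pi / real m))"
    using invariant_necessary by (auto simp: Kpoly_dvd_Jdiff_iff)
next
  assume "\<exists>k m :: nat. 0 < 2 * k \<and> 2 * k < m \<and>
              q = 2 + 2 * complex_of_real (cos (2 * real k * pi / real m))"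
  then obtain k m :: nat where km: "0 < 2 * k" "2 * k < m"
    "q = 2 + 2 * complex_of_real (cos (2 * real k * pi / real m))" by blast
  then show "\<exists>J :: complex poly. degree J > 0 \<and> Kpoly q dvd Jdiff J"
    using chebyshev_solution[OF km] by (intro exI) auto
next
  fix k m :: nat
  assume "0 < 2 * k \<and> 2 * k < m \<and> coprime k m \<and>
              q = 2 + 2 * complex_of_real (cos (2 * real k * pi / real m))"
  then show "let J = pcompose (cheb m) [:0, complex_of_real (sin (2 * real k * pi / real m)):]
             in degree J > 0 \<and> Kpoly q dvd Jdiff J \<and> degree J = m \<and>
                (\<forall>J' :: complex poly. degree J' > 0 \<and> Kpoly q dvd Jdiff J' \<longrightarrow> m \<le> degree J')"
    using chebyshev_solution[of k m q] chebyshev_minimal[of k m q]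
    by (auto simp: Let_def Kpoly_dvd_Jdiff_iff)
qed

end
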